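(* Let $\beta>0$, $T>0$, $\lambda>0$, put $M=\beta T$, and let $B_M$ satisfy $0<B_M<\beta T$. Let $T_{\text{th}}=\dfrac{M}{\ln(1+M/\lambda)}$ and, for $x\ge 0$, $$P_{e|1}(x)=\sum_{y\in\mathbb{Z}_{\ge 0},\, y<T_{\text{th}}} e^{-(x+\lambda)}\frac{(x+\lambda)^y}{y!}.$$ Consider the optimization problem over real sequences $\{\Delta_i\}_{i=1}^\infty$: $$\min_{\{\Delta_i\}} \sum_{j=1}^{\infty}\frac{1}{2^{j}}P_{e|1}(M+\Delta_j)\quad\text{s.t.}\quad B_M-\sum_{j=1}^{i}\Delta_j\ge 0\ \text{ and }\ \sum_{j=1}^{i}\Delta_j\ge 0\ \text{ for all } i\ge 1.$$ Then for the optimal solution $\{\Delta^*_i\}_{i=1}^\infty$ there exists an index $J$ such that $\Delta^*_j=0$ for all $j>J$; that is, only finitely many of the optimal increments are positive.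
   Context: This is the "no-ISI" adaptive release-duration problem for a molecular transmitter with molecule production rate $\beta$, slot length $T$, storage capacity $B_M=\beta(T-T_M)$; $\Delta_i$ is the increment of the number of released molecules (for bit "1") in state $s_{i-1}$. $P_{e|1}(x)$ is the probability that a Poisson$(x+\lambda)$ count falls below the fixed threshold $T_{\text{th}}$. The paper assumes $M\gg\lambda$, so that $T_{\text{th}}<M$. *)

theory Defs
  imports Complex_Main
begin

definition Tth :: "real \<Rightarrow> real \<Rightarrow> real" where
  "Tth M lam = M / ln (1 + M / lam)"

definition Pe1 :: "real \<Rightarrow> real \<Rightarrow> real \<Rightarrow> real" where
  "Pe1 M lam x = (\<Sum>y\<in>{y::nat. real y < Tth M lam}.
      exp (- (x + lam)) * (x + lam) ^ y / fact y)"

text \<open>Feasibility: increments indexed from 1 (Delta 0 is unused); partial sums in [0, B_M].\<close>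
definition feasible :: "real \<Rightarrow> (nat \<Rightarrow> real) \<Rightarrow> bool" where
  "feasible BM \<Delta> \<longleftrightarrow> (\<forall>i\<ge>1. BM - (\<Sum>j=1..i. \<Delta> j) \<ge> 0 \<and> (\<Sum>j=1..i. \<Delta> j) \<ge> 0)"

definition objective :: "real \<Rightarrow> real \<Rightarrow> (nat \<Rightarrow> real) \<Rightarrow> real" where
  "objective M lam \<Delta> = (\<Sum>j. (1/2) ^ (Suc j) * Pe1 M lam (M + \<Delta> (Suc j)))"

end

theory Submission
  imports Defs
begin

(* Write g x = P_{e|1}(M + x). Since P_{e|1} is a Poisson lower tail, its derivative is minus the
   Poisson mass p_n at the largest count n below T_th, and n < T_th <= M + lam. Hence g decreases
   with slope at least c = p_n(M + lam) on [-B_M, 0], at most c on [0, oo), and at least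
   c' = p_n(M + lam + B_M) > 0 on [0, B_M]. An exchange argument then applies to an optimal
   sequence: a negative increment can be raised by lowering a later positive one (or on its own if
   there is none), which pays off because earlier terms carry larger weights; and once all
   increments are nonnegative, any positive Delta_k with 2^(1-k) c < c' can profitably be moved
   into Delta_1. So Delta_k = 0 for all large k. *)

definition poisson_term :: "nat \<Rightarrow> real \<Rightarrow> real" where
  "poisson_term n x = exp (- x) * x ^ n / fact n"

definition poisson_cdf :: "nat \<Rightarrow> real \<Rightarrow> real" where
  "poisson_cdf n x = (\<Sum>y\<le>n. poisson_term y x)"

lemma poisson_term_Suc_deriv:
  "(poisson_term (Suc n) has_real_derivative poisson_term n x - poisson_term (Suc n) x) (at x)"
proof -
  have "((\<lambda>x. exp (- x) * x ^ Suc n) has_real_derivative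
      exp (- x) * (real (Suc n) * x ^ n) - exp (- x) * x ^ Suc n) (at x)"
    by (auto intro!: derivative_eq_intros DERIV_pow simp del: power_Suc)
  then have "((\<lambda>x. exp (- x) * x ^ Suc n / fact (Suc n)) has_real_derivative
      (exp (- x) * (real (Suc n) * x ^ n) - exp (- x) * x ^ Suc n) / fact (Suc n)) (at x)"
    by (rule DERIV_cdivide)
  moreover have "real (Suc n) / fact (Suc n) = (1 / fact n :: real)"
    by simp
  ultimately show ?thesis
    by (simp add: poisson_term_def[abs_def] diff_divide_distrib)
qed

lemma poisson_cdf_deriv: "(poisson_cdf n has_real_derivative - poisson_term n x) (at x)"
proof (induction n)
  case 0
  show ?case
    by (simp add: poisson_cdf_def poisson_term_def[abs_def]) (auto intro!: derivative_eq_intros)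
next
  case (Suc n)
  have "poisson_cdf (Suc n) = (\<lambda>x. poisson_cdf n x + poisson_term (Suc n) x)"
    by (simp add: poisson_cdf_def fun_eq_iff)
  then show ?case
    using DERIV_add[OF Suc.IH poisson_term_Suc_deriv[of n x]] by simp
qed

lemma poisson_term_eq_exp: "0 < x \<Longrightarrow> poisson_term n x = exp (real n * ln x - x) / fact n"
  by (simp add: poisson_term_def exp_diff exp_of_nat_mult exp_minus field_simps)

lemma poisson_term_le_iff:
  "0 < x \<Longrightarrow> 0 < y \<Longrightarrow>
    poisson_term n x \<le> poisson_term n y \<longleftrightarrow> real n * ln x - x \<le> real n * ln y - y"
  by (simp add: poisson_term_eq_exp divide_le_cancel)

lemma poisson_term_antimono:
  assumes "0 < x" "real n \<le> x" "x \<le> y"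
  shows "poisson_term n y \<le> poisson_term n x"
proof -
  have "ln y - ln x \<le> (y - x) / x"
    using ln_le_minus_one[of "y / x"] assms by (simp add: ln_div diff_divide_distrib)
  then have "real n * (ln y - ln x) \<le> (real n / x) * (y - x)"
    using mult_left_mono[of _ _ "real n"] by fastforce
  also have "\<dots> \<le> y - x"
    using mult_right_mono[of "real n / x" 1 "y - x"] assms by simp
  finally show ?thesis using assms by (simp add: poisson_term_le_iff algebra_simps)
qed

lemma poisson_term_mono:
  assumes "0 < x" "x \<le> y" "y \<le> real n"
  shows "poisson_term n x \<le> poisson_term n y"
proof -
  have "(y - x) / y \<le> ln y - ln x"
    using ln_le_minus_one[of "x / y"] assms by (simp add: ln_div diff_divide_distrib)
  then have "(real n / y) * (y - x) \<le> real n * (ln y - ln x)"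
    using mult_left_mono[of _ _ "real n"] by fastforce
  moreover have "y - x \<le> (real n / y) * (y - x)"
    using mult_right_mono[of 1 "real n / y" "y - x"] assms by simp
  ultimately show ?thesis using assms by (simp add: poisson_term_le_iff algebra_simps)
qed

lemma poisson_term_ge_min:
  assumes "0 < a" "a \<le> z" "z \<le> b"
  shows "min (poisson_term n a) (poisson_term n b) \<le> poisson_term n z"
proof (cases "real n \<le> z")
  case True
  then show ?thesis using assms poisson_term_antimono[of z n b] by simp
next
  case False
  then show ?thesis using assms poisson_term_mono[of a z n] by simp
qed

lemma poisson_cdf_mvt:
  assumes "a < b"
  obtains z where "a < z" "z < b" "poisson_cdf n a - poisson_cdf n b = (b - a) * poisson_term n z"
proof -
  obtain z where "a < z" "z < b" "poisson_cdf n b - poisson_cdf n a = (b - a) * - poisson_term n z"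
    using MVT2[OF assms, of "poisson_cdf n" "\<lambda>x. - poisson_term n x"] poisson_cdf_deriv by blast
  then show ?thesis by (intro that[of z]) (auto simp: algebra_simps)
qed

lemma poisson_cdf_diff_ge:
  assumes "a \<le> b" "\<And>z. a < z \<Longrightarrow> z < b \<Longrightarrow> c \<le> poisson_term n z"
  shows "c * (b - a) \<le> poisson_cdf n a - poisson_cdf n b"
proof (cases "a = b")
  case False
  then obtain z where "a < z" "z < b" "poisson_cdf n a - poisson_cdf n b = (b - a) * poisson_term n z"
    using poisson_cdf_mvt assms(1) by (metis order_le_imp_less_or_eq)
  then show ?thesis using assms(2)[of z] by (simp add: mult.commute mult_right_mono)
qed simp

lemma poisson_cdf_diff_le:
  assumes "a \<le> b" "\<And>z. a < z \<Longrightarrow> z < b \<Longrightarrow> poisson_term n z \<le> c"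
  shows "poisson_cdf n a - poisson_cdf n b \<le> c * (b - a)"
proof (cases "a = b")
  case False
  then obtain z where "a < z" "z < b" "poisson_cdf n a - poisson_cdf n b = (b - a) * poisson_term n z"
    using poisson_cdf_mvt assms(1) by (metis order_le_imp_less_or_eq)
  then show ?thesis using assms(2)[of z] by (simp add: mult.commute mult_right_mono)
qed simp

lemma Tth_pos: "0 < M \<Longrightarrow> 0 < lam \<Longrightarrow> 0 < Tth M lam"
  by (simp add: Tth_def ln_gt_zero)

lemma ln_one_plus_div:
  fixes M lam :: real
  assumes "0 < lam" "0 < M + lam"
  shows "ln (1 + M / lam) = ln (M + lam) - ln lam"
  using assms ln_div[of "M + lam" lam] by (simp add: field_simps)

lemma Tth_le:
  assumes "0 < M" "0 < lam"
  shows "Tth M lam \<le> M + lam"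
proof -
  have "ln lam - ln (M + lam) \<le> lam / (M + lam) - 1"
    using ln_le_minus_one[of "lam / (M + lam)"] assms by (simp add: ln_div)
  also have "\<dots> = - (M / (M + lam))"
    using assms by (simp add: field_simps)
  finally have "M / (M + lam) \<le> ln (1 + M / lam)"
    using assms by (simp add: ln_one_plus_div)
  then show ?thesis
    using assms by (simp add: Tth_def divide_le_eq ln_gt_zero field_simps)
qed

lemma nat_less_iff_le_ceiling_pred:
  fixes t :: real
  assumes "0 < t"
  shows "real y < t \<longleftrightarrow> y \<le> nat \<lceil>t\<rceil> - 1"
  using assms by linarith

lemma Pe1_eq_poisson_cdf:
  assumes "0 < Tth M lam"
  shows "Pe1 M lam x = poisson_cdf (nat \<lceil>Tth M lam\<rceil> - 1) (x + lam)"
  unfolding Pe1_def poisson_cdf_def poisson_term_def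
  using nat_less_iff_le_ceiling_pred[OF assms] by (simp add: atMost_def)

(* T_th is the count at which the Poisson(lam) and Poisson(M + lam) masses coincide, so below it
   p_n(M + lam) <= p_n(lam); unimodality of p_n extends this to the whole of [lam, M + lam]. *)
lemma poisson_term_at_mean_le:
  assumes "0 < M" "0 < lam" "real n < Tth M lam" "lam \<le> z" "z \<le> M + lam"
  shows "poisson_term n (M + lam) \<le> poisson_term n z"
proof -
  have "real n * (ln (M + lam) - ln lam) < M"
    using assms(1-3) by (simp add: Tth_def less_divide_eq ln_gt_zero ln_one_plus_div)
  then have "poisson_term n (M + lam) \<le> poisson_term n lam"
    using assms(1,2) by (simp add: poisson_term_le_iff algebra_simps)
  then show ?thesis
    using poisson_term_ge_min[of lam z "M + lam" n] assms by simp
qed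

definition discounted_cost :: "(real \<Rightarrow> real) \<Rightarrow> (nat \<Rightarrow> real) \<Rightarrow> real" where
  "discounted_cost g \<Delta> = (\<Sum>j. (1/2) ^ Suc j * g (\<Delta> (Suc j)))"

lemma discounted_cost_local_change:
  fixes g :: "real \<Rightarrow> real" and D D' :: "nat \<Rightarrow> real"
  assumes "summable (\<lambda>j. (1/2) ^ Suc j * g (D (Suc j)))"
    and "finite F" "0 \<notin> F" "\<And>j. j \<notin> F \<Longrightarrow> D' j = D j"
  shows "discounted_cost g D' = discounted_cost g D + (\<Sum>j\<in>F. (1/2) ^ j * (g (D' j) - g (D j)))"
proof -
  define A where "A = Suc -` F"
  have "finite A" unfolding A_def using assms(2) by (rule finite_vimageI) simp
  have F_eq: "F = Suc ` A"
    unfolding A_def using assms(3) by (auto simp: image_iff) (metis not0_implies_Suc)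
  have terms: "(\<lambda>j. (1/2) ^ Suc j * g (D' (Suc j))) =
      (\<lambda>j. if j \<in> A then (1/2) ^ Suc j * g (D' (Suc j)) else (1/2) ^ Suc j * g (D (Suc j)))"
    using assms(4) by (auto simp: A_def)
  have "(\<lambda>j. (1/2) ^ Suc j * g (D' (Suc j))) sums
      (discounted_cost g D + (\<Sum>j\<in>A. (1/2) ^ Suc j * g (D' (Suc j)) - (1/2) ^ Suc j * g (D (Suc j))))"
    unfolding terms discounted_cost_def
    using summable_sums[OF assms(1)] \<open>finite A\<close> by (rule sums_If_finite_set') simp
  moreover have "(\<Sum>j\<in>A. (1/2) ^ Suc j * g (D' (Suc j)) - (1/2) ^ Suc j * g (D (Suc j))) =
      (\<Sum>j\<in>F. (1/2) ^ j * (g (D' j) - g (D j)))"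
    unfolding F_eq by (simp add: sum.reindex right_diff_distrib)
  ultimately show ?thesis
    unfolding discounted_cost_def by (simp add: sums_iff)
qed

lemma feasible_iff_partial_sums:
  "feasible BM D \<longleftrightarrow> (\<forall>m. 0 \<le> (\<Sum>j=1..m. D j) \<and> (\<Sum>j=1..m. D j) \<le> BM)"
proof
  assume feas: "feasible BM D"
  show "\<forall>m. 0 \<le> (\<Sum>j=1..m. D j) \<and> (\<Sum>j=1..m. D j) \<le> BM"
  proof
    fix m
    show "0 \<le> (\<Sum>j=1..m. D j) \<and> (\<Sum>j=1..m. D j) \<le> BM"
    proof (cases "m = 0")
      case True
      then show ?thesis using feas by (auto simp: feasible_def dest: spec[of _ 1])
    next
      case False
      then show ?thesis using feas by (simp add: feasible_def)
    qed
  qed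
qed (simp add: feasible_def)

lemma feasible_increment_bounds:
  assumes "feasible BM D" "1 \<le> j"
  shows "-BM \<le> D j \<and> D j \<le> BM"
proof -
  obtain i where "j = Suc i" using assms(2) by (cases j) auto
  then have "D j = (\<Sum>l=1..j. D l) - (\<Sum>l=1..i. D l)" by simp
  moreover have "0 \<le> (\<Sum>l=1..j. D l)" "(\<Sum>l=1..j. D l) \<le> BM"
    "0 \<le> (\<Sum>l=1..i. D l)" "(\<Sum>l=1..i. D l) \<le> BM"
    using assms(1) unfolding feasible_iff_partial_sums by blast+
  ultimately show ?thesis by linarith
qed

lemma partial_sum_split:
  fixes D :: "nat \<Rightarrow> real"
  assumes "m \<le> k"
  shows "(\<Sum>j=1..k. D j) = (\<Sum>j=1..m. D j) + (\<Sum>j\<in>{m<..k}. D j)"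
proof -
  have "{1..k} = {1..m} \<union> {m<..k}" using assms by auto
  then show ?thesis by (simp add: sum.union_disjoint ivl_disj_int)
qed

lemma sum_fun_upd:
  fixes f :: "'a \<Rightarrow> 'b::ab_group_add"
  assumes "finite A"
  shows "sum (f(i := x)) A = sum f A + (if i \<in> A then x - f i else 0)"
proof -
  have rest: "sum (f(i := x)) (A - {i}) = sum f (A - {i})" by (rule sum.cong) auto
  show ?thesis
  proof (cases "i \<in> A")
    case True
    then show ?thesis using assms rest by (simp add: sum.remove[of A i] del: fun_upd_apply) simp
  next
    case False
    then show ?thesis using rest by simp
  qed
qed

lemma feasible_clear:
  assumes "feasible BM D" "1 \<le> i" "D i \<le> 0" "\<And>m. i < m \<Longrightarrow> D m \<le> 0"
  shows "feasible BM (D(i := 0))"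
  unfolding feasible_iff_partial_sums
proof
  fix m
  have S: "(\<Sum>j=1..m. (D(i := 0)) j) = (\<Sum>j=1..m. D j) - (if i \<le> m then D i else 0)"
    using assms(2) sum_fun_upd[of "{1..m}" D i 0] by (simp del: fun_upd_apply)
  show "0 \<le> (\<Sum>j=1..m. (D(i := 0)) j) \<and> (\<Sum>j=1..m. (D(i := 0)) j) \<le> BM"
  proof (cases "i \<le> m")
    case True
    obtain h where h: "i = Suc h" using assms(2) by (cases i) auto
    have "(\<Sum>j=1..m. D j) = (\<Sum>j=1..i. D j) + (\<Sum>j\<in>{i<..m}. D j)"
      using True by (rule partial_sum_split)
    also have "\<dots> \<le> (\<Sum>j=1..i. D j)"
      using assms(4) by (auto intro: sum_nonpos)
    also have "\<dots> = (\<Sum>j=1..h. D j) + D i" using h by simp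
    finally have "(\<Sum>j=1..m. D j) \<le> (\<Sum>j=1..h. D j) + D i" .
    moreover have "0 \<le> (\<Sum>j=1..m. D j)" "(\<Sum>j=1..h. D j) \<le> BM"
      using assms(1) unfolding feasible_iff_partial_sums by blast+
    ultimately show ?thesis using S True assms(3) by simp
  qed (use assms(1) S in \<open>simp add: feasible_iff_partial_sums\<close>)
qed

lemma partial_sum_add_le:
  fixes D :: "nat \<Rightarrow> real"
  assumes "m < k" "\<And>j. m < j \<Longrightarrow> j < k \<Longrightarrow> 0 \<le> D j"
  shows "(\<Sum>j=1..m. D j) + D k \<le> (\<Sum>j=1..k. D j)"
proof -
  have "D k \<le> (\<Sum>j\<in>{m<..k}. D j)"
    using assms by (intro member_le_sum) auto
  then show ?thesis using partial_sum_split[of m k D] assms(1) by simp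
qed

lemma feasible_transfer:
  assumes "feasible BM D" "1 \<le> i" "i < k" "0 \<le> e" "e \<le> D k"
    and "\<And>m. i < m \<Longrightarrow> m < k \<Longrightarrow> 0 \<le> D m"
  shows "feasible BM (D(i := D i + e, k := D k - e))"
  unfolding feasible_iff_partial_sums
proof
  fix m
  let ?D' = "D(i := D i + e, k := D k - e)"
  have S: "(\<Sum>j=1..m. ?D' j) = (\<Sum>j=1..m. D j) + (if i \<le> m \<and> m < k then e else 0)"
    using assms(2,3) sum_fun_upd[of "{1..m}" "D(i := D i + e)" k "D k - e"]
      sum_fun_upd[of "{1..m}" D i "D i + e"] by (simp del: fun_upd_apply) simp
  show "0 \<le> (\<Sum>j=1..m. ?D' j) \<and> (\<Sum>j=1..m. ?D' j) \<le> BM"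
  proof (cases "i \<le> m \<and> m < k")
    case True
    then have "(\<Sum>j=1..m. D j) + D k \<le> (\<Sum>j=1..k. D j)"
      using assms(6) by (intro partial_sum_add_le) auto
    moreover have "0 \<le> (\<Sum>j=1..m. D j)" "(\<Sum>j=1..k. D j) \<le> BM"
      using assms(1) unfolding feasible_iff_partial_sums by blast+
    ultimately show ?thesis using S True assms(4,5) by simp
  next
    case False
    then show ?thesis using assms(1) S unfolding feasible_iff_partial_sums by (auto simp del: fun_upd_apply)
  qed
qed

locale slope_bounded_cost =
  fixes g :: "real \<Rightarrow> real" and BM c c' :: real
  assumes c_pos: "0 < c" and c'_pos: "0 < c'"
    and steep_below: "\<And>a b. -BM \<le> a \<Longrightarrow> a \<le> b \<Longrightarrow> b \<le> 0 \<Longrightarrow> c * (b - a) \<le> g a - g b"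
    and flat_above: "\<And>a b. 0 \<le> a \<Longrightarrow> a \<le> b \<Longrightarrow> g a - g b \<le> c * (b - a)"
    and steep_above: "\<And>a b. 0 \<le> a \<Longrightarrow> a \<le> b \<Longrightarrow> b \<le> BM \<Longrightarrow> c' * (b - a) \<le> g a - g b"
begin

lemma bounded_on_feasible_range:
  assumes "-BM \<le> x" "x \<le> BM"
  shows "\<bar>g x\<bar> \<le> \<bar>g (-BM)\<bar> + \<bar>g 0\<bar> + c * BM"
proof (cases "x \<le> 0")
  case True
  have "c * (x + BM) \<le> g (-BM) - g x" "c * (0 - x) \<le> g x - g 0"
    using steep_below[of "-BM" x] steep_below[of x 0] assms True by auto
  moreover have "0 \<le> c * (x + BM)" "0 \<le> c * (0 - x)" "0 \<le> c * BM"
    using c_pos assms True by (simp_all add: mult_nonneg_nonpos)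
  ultimately show ?thesis using c_pos assms by linarith
next
  case False
  have "g 0 - g x \<le> c * x" "c' * x \<le> g 0 - g x"
    using flat_above[of 0 x] steep_above[of 0 x] assms False by auto
  moreover have "c * x \<le> c * BM" "0 \<le> c' * x"
    using c_pos c'_pos assms False by auto
  ultimately show ?thesis by linarith
qed

lemma summable_cost:
  assumes "feasible BM D"
  shows "summable (\<lambda>j. (1/2) ^ Suc j * g (D (Suc j)))"
proof (rule summable_comparison_test)
  let ?K = "\<bar>g (-BM)\<bar> + \<bar>g 0\<bar> + c * BM"
  show "\<exists>N. \<forall>j\<ge>N. norm ((1/2) ^ Suc j * g (D (Suc j))) \<le> ?K * (1/2) ^ Suc j"
    using bounded_on_feasible_range feasible_increment_bounds[OF assms]
    by (auto simp: abs_mult mult.commute intro!: mult_left_mono)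
  show "summable (\<lambda>j. ?K * (1/2::real) ^ Suc j)"
    by (intro summable_mult summable_geometric_iff[THEN iffD2] summable_Suc_iff[THEN iffD2]) simp
qed

end

locale optimal_allocation = slope_bounded_cost +
  fixes \<Delta> :: "nat \<Rightarrow> real"
  assumes feasible: "feasible BM \<Delta>"
    and optimal: "\<And>\<Delta>'. feasible BM \<Delta>' \<Longrightarrow> discounted_cost g \<Delta> \<le> discounted_cost g \<Delta>'"
begin

lemma local_change_nonneg:
  assumes "feasible BM D" "finite F" "0 \<notin> F" "\<And>j. j \<notin> F \<Longrightarrow> D j = \<Delta> j"
  shows "0 \<le> (\<Sum>j\<in>F. (1/2) ^ j * (g (D j) - g (\<Delta> j)))"
  using optimal[OF assms(1)] discounted_cost_local_change[OF summable_cost[OF feasible] assms(2-4)]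
  by simp

lemma clear_unprofitable:
  assumes "1 \<le> i" "\<Delta> i \<le> 0" "\<And>m. i < m \<Longrightarrow> \<Delta> m \<le> 0"
  shows "g (\<Delta> i) \<le> g 0"
  using local_change_nonneg[OF feasible_clear[OF feasible assms], of "{i}"] assms(1)
  by (simp add: zero_le_mult_iff power_le_zero_eq)

lemma transfer_unprofitable:
  assumes "1 \<le> i" "i < k" "0 \<le> e" "e \<le> \<Delta> k" "\<And>m. i < m \<Longrightarrow> m < k \<Longrightarrow> 0 \<le> \<Delta> m"
  shows "(1/2) ^ i * (g (\<Delta> i) - g (\<Delta> i + e)) \<le> (1/2) ^ k * (g (\<Delta> k - e) - g (\<Delta> k))"
  using local_change_nonneg[OF feasible_transfer[OF feasible assms], of "{i, k}"] assms(1,2)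
  by (simp add: algebra_simps)

lemma increment_nonneg_before_nonpos_tail:
  assumes "1 \<le> i" "\<And>m. i < m \<Longrightarrow> \<Delta> m \<le> 0"
  shows "0 \<le> \<Delta> i"
proof (rule ccontr)
  assume "\<not> 0 \<le> \<Delta> i"
  then have neg: "\<Delta> i < 0" by simp
  then have "g (\<Delta> i) \<le> g 0"
    using assms by (intro clear_unprofitable) auto
  moreover have "c * (0 - \<Delta> i) \<le> g (\<Delta> i) - g 0"
    using feasible_increment_bounds[OF feasible assms(1)] neg by (intro steep_below) auto
  ultimately show False using mult_pos_neg[OF c_pos neg] by (simp add: right_diff_distrib)
qed

lemma increment_nonneg_before_positive:
  assumes "1 \<le> i" "i < k" "0 < \<Delta> k" "\<And>m. i < m \<Longrightarrow> m < k \<Longrightarrow> 0 \<le> \<Delta> m"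
  shows "0 \<le> \<Delta> i"
proof (rule ccontr)
  assume "\<not> 0 \<le> \<Delta> i"
  define e where "e = min (- \<Delta> i) (\<Delta> k)"
  have "0 < e" using \<open>\<not> 0 \<le> \<Delta> i\<close> assms(3) by (simp add: e_def)
  have gain: "c * e \<le> g (\<Delta> i) - g (\<Delta> i + e)"
    using steep_below[of "\<Delta> i" "\<Delta> i + e"] feasible_increment_bounds[OF feasible assms(1)] \<open>0 < e\<close>
    by (simp add: e_def)
  have loss: "g (\<Delta> k - e) - g (\<Delta> k) \<le> c * e"
    using flat_above[of "\<Delta> k - e" "\<Delta> k"] \<open>0 < e\<close> by (simp add: e_def)
  have "(1/2) ^ i * (c * e) \<le> (1/2) ^ i * (g (\<Delta> i) - g (\<Delta> i + e))"
    using gain by (simp add: mult_left_mono)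
  also have "\<dots> \<le> (1/2) ^ k * (g (\<Delta> k - e) - g (\<Delta> k))"
    using assms \<open>0 < e\<close> by (intro transfer_unprofitable) (auto simp: e_def)
  also have "\<dots> \<le> (1/2) ^ k * (c * e)"
    using loss by (simp add: mult_left_mono)
  finally have "(1/2) ^ i * (c * e) \<le> (1/2) ^ k * (c * e)" .
  moreover have "(1/2::real) ^ k < (1/2) ^ i"
    using assms(2) by (intro power_strict_decreasing) auto
  ultimately show False using c_pos \<open>0 < e\<close> by simp
qed

lemma increments_nonneg:
  assumes "1 \<le> j"
  shows "0 \<le> \<Delta> j"
proof (cases "\<exists>k>j. 0 < \<Delta> k")
  case False
  then show ?thesis
    using increment_nonneg_before_nonpos_tail[OF assms] by (meson not_less)
next
  case True
  then obtain k where "j < k" "0 < \<Delta> k" by blast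
  show ?thesis
  proof (rule ccontr)
    assume "\<not> 0 \<le> \<Delta> j"
    define N where "N = {i. i < k \<and> \<Delta> i < 0}"
    define i where "i = Max N"
    have "finite N" "j \<in> N" using \<open>j < k\<close> \<open>\<not> 0 \<le> \<Delta> j\<close> by (auto simp: N_def)
    then have "i \<in> N" "j \<le> i" unfolding i_def by (auto intro: Max_in Max_ge)
    then have "i < k" "\<Delta> i < 0" by (simp_all add: N_def)
    have "0 \<le> \<Delta> m" if "i < m" "m < k" for m
    proof -
      have "m \<notin> N" using that(1) Max_ge[OF \<open>finite N\<close>, of m] by (auto simp: i_def)
      then show ?thesis using that(2) by (simp add: N_def)
    qed
    then have "0 \<le> \<Delta> i"
      using increment_nonneg_before_positive[of i k] assms \<open>j \<le> i\<close> \<open>i < k\<close> \<open>0 < \<Delta> k\<close> by simp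
    with \<open>\<Delta> i < 0\<close> show False by simp
  qed
qed

theorem increments_eventually_zero: "\<exists>J. \<forall>j>J. \<Delta> j = 0"
proof -
  obtain r where r: "(1/2) ^ r * c < c'"
    using real_arch_pow_inv[of "c' / c" "1/2"] c_pos c'_pos by (auto simp: less_divide_eq)
  have "\<Delta> k = 0" if "Suc r < k" for k
  proof (rule ccontr)
    assume "\<Delta> k \<noteq> 0"
    then have pos: "0 < \<Delta> k" using increments_nonneg[of k] that by simp
    have "\<Delta> 1 + \<Delta> k \<le> (\<Sum>j=1..k. \<Delta> j)"
      using partial_sum_add_le[of 1 k \<Delta>] increments_nonneg that by simp
    then have "\<Delta> 1 + \<Delta> k \<le> BM"
      using feasible unfolding feasible_iff_partial_sums by (meson order.trans)
    then have gain: "c' * \<Delta> k \<le> g (\<Delta> 1) - g (\<Delta> 1 + \<Delta> k)"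
      using steep_above[of "\<Delta> 1" "\<Delta> 1 + \<Delta> k"] increments_nonneg[of 1] pos by simp
    have loss: "g 0 - g (\<Delta> k) \<le> c * \<Delta> k"
      using flat_above[of 0 "\<Delta> k"] pos by simp
    have "(1/2) * (c' * \<Delta> k) \<le> (1/2) * (g (\<Delta> 1) - g (\<Delta> 1 + \<Delta> k))"
      using gain by simp
    also have "\<dots> \<le> (1/2) ^ k * (g (\<Delta> k - \<Delta> k) - g (\<Delta> k))"
      using transfer_unprofitable[of 1 k "\<Delta> k"] increments_nonneg that pos by simp
    also have "\<dots> \<le> (1/2) ^ k * (c * \<Delta> k)"
      using loss by (simp add: mult_left_mono)
    also have "\<dots> = (1/2) * ((1/2) ^ (k - 1) * c * \<Delta> k)"
      using that by (simp add: power_eq_if)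
    finally have "c' \<le> (1/2) ^ (k - 1) * c"
      using pos by simp
    also have "\<dots> \<le> (1/2) ^ r * c"
      using that c_pos by (intro mult_right_mono power_decreasing) auto
    finally show False using r by simp
  qed
  then show ?thesis by blast
qed

end


lemma Pe1_slope_bounded_cost:
  assumes "0 < M" "0 < lam" "0 < BM" "BM < M"
  obtains c c' where "slope_bounded_cost (\<lambda>x. Pe1 M lam (M + x)) BM c c'"
proof -
  define n where "n = nat \<lceil>Tth M lam\<rceil> - 1"
  define \<mu> where "\<mu> = M + lam"
  have "real n < Tth M lam"
    using nat_less_iff_le_ceiling_pred[OF Tth_pos[OF assms(1,2)]] by (simp add: n_def)
  have "real n \<le> \<mu>"
    using \<open>real n < Tth M lam\<close> Tth_le[OF assms(1,2)] by (simp add: \<mu>_def)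
  have "0 < \<mu>" using assms by (simp add: \<mu>_def)
  have g: "Pe1 M lam (M + x) = poisson_cdf n (\<mu> + x)" for x
    using Pe1_eq_poisson_cdf[OF Tth_pos[OF assms(1,2)]] by (simp add: n_def \<mu>_def algebra_simps)
  show ?thesis
  proof (rule that, unfold_locales, unfold g)
    show "0 < poisson_term n \<mu>" "0 < poisson_term n (\<mu> + BM)"
      using \<open>0 < \<mu>\<close> assms by (simp_all add: poisson_term_def)
  next
    fix a b :: real assume "-BM \<le> a" "a \<le> b" "b \<le> 0"
    then show "poisson_term n \<mu> * (b - a) \<le> poisson_cdf n (\<mu> + a) - poisson_cdf n (\<mu> + b)"
      using poisson_cdf_diff_ge[of "\<mu> + a" "\<mu> + b" "poisson_term n \<mu>" n]
        poisson_term_at_mean_le[OF assms(1,2) \<open>real n < Tth M lam\<close>] assms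
      by (simp add: \<mu>_def)
  next
    fix a b :: real assume "0 \<le> a" "a \<le> b"
    then show "poisson_cdf n (\<mu> + a) - poisson_cdf n (\<mu> + b) \<le> poisson_term n \<mu> * (b - a)"
      using poisson_cdf_diff_le[of "\<mu> + a" "\<mu> + b" n "poisson_term n \<mu>"]
        poisson_term_antimono[OF \<open>0 < \<mu>\<close> \<open>real n \<le> \<mu>\<close>] by simp
  next
    fix a b :: real assume "0 \<le> a" "a \<le> b" "b \<le> BM"
    then show "poisson_term n (\<mu> + BM) * (b - a) \<le> poisson_cdf n (\<mu> + a) - poisson_cdf n (\<mu> + b)"
      using poisson_cdf_diff_ge[of "\<mu> + a" "\<mu> + b" "poisson_term n (\<mu> + BM)" n]
        poisson_term_antimono[of _ n "\<mu> + BM"] \<open>0 < \<mu>\<close> \<open>real n \<le> \<mu>\<close> by simp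
  qed
qed

lemma objective_eq_discounted_cost:
  "objective M lam \<Delta> = discounted_cost (\<lambda>x. Pe1 M lam (M + x)) \<Delta>"
  by (simp add: objective_def discounted_cost_def)

theorem lemma2:
  fixes \<beta> T lam BM :: real and \<Delta> :: "nat \<Rightarrow> real"
  assumes "\<beta> > 0" and "T > 0" and "lam > 0"
    and "0 < BM" and "BM < \<beta> * T"
    and "feasible BM \<Delta>"
    and "\<forall>\<Delta>'. feasible BM \<Delta>' \<longrightarrow> objective (\<beta> * T) lam \<Delta> \<le> objective (\<beta> * T) lam \<Delta>'"
  shows "\<exists>J. \<forall>j>J. \<Delta> j = 0"
proof -
  obtain c c' where "slope_bounded_cost (\<lambda>x. Pe1 (\<beta> * T) lam (\<beta> * T + x)) BM c c'"
    using Pe1_slope_bounded_cost[of "\<beta> * T" lam BM] assms(1-5) by auto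
  then have "optimal_allocation (\<lambda>x. Pe1 (\<beta> * T) lam (\<beta> * T + x)) BM c c' \<Delta>"
    using assms(6,7)
    by (auto intro!: optimal_allocation.intro simp: optimal_allocation_axioms_def objective_eq_discounted_cost)
  then show ?thesis
    by (rule optimal_allocation.increments_eventually_zero)
qed

end
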